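(* Let $(U,d)$ be an asymmetric pseudometric space, $k\ge 2$, $O\subseteq U$ an optimal solution of AMMD with optimum $R^*=\operatorname{div}(O)>0$, and $R'=\min\{d(u,v): d(u,v)\ge R^*/3,\ u,v\in U,\ u\ne v\}$. Let $0<R\le R'$ and run the clustering procedure Cluster$(U,d,R)$, producing centers $c_1,c_2,\dots$ and sets $A_1,A_2,\dots$. Then (i) $|A_t\cap O|\le 1$ for all $t$; and (ii) for any $t\ne t'$ with $|A_t\cap O|=1$ and $|A_{t'}\cap O|=1$, we have $d_{\min}(c_t,c_{t'})\ge R'\ge R^*/3$.
   Context: An asymmetric pseudometric space $(U,d)$ is a finite set $U$ with $d:U\times U\to\mathbb{R}_{\ge 0}$ such that $d(u,u)=0$ and $d(u,v)\le d(u,w)+d(w,v)$ for all $u,v,w\in U$ ($d$ need not be symmetric). For $S\subseteq U$, $\operatorname{div}(S)=\min_{u,v\in S,\,u\ne v} d(u,v)$; AMMD asks for $O\subseteq U$, $|O|=k$, maximizing $\operatorname{div}(O)$. $d_{\min}(u,v)=\min\{d(u,v),d(v,u)\}$, $d_{\max}(u,v)=\max\{d(u,v),d(v,u)\}$. Cluster$(U,d,R)$: initially all points are unmarked and $t=1$; while an unmarked point exists, choose any unmarked point $c_t$, let $A_t=\{v\in U \text{ unmarked}: d_{\max}(c_t,v)<R\}$, mark all points of $A_t$, add $c_t$ to the output set $U'$, and increment $t$. It returns $U'=\{c_1,c_2,\dots\}$. *)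

theory Defs
  imports Complex_Main
begin

definition asym_pseudometric :: "'a set \<Rightarrow> ('a \<Rightarrow> 'a \<Rightarrow> real) \<Rightarrow> bool" where
  "asym_pseudometric U d \<longleftrightarrow> finite U \<and>
     (\<forall>u\<in>U. \<forall>v\<in>U. d u v \<ge> 0) \<and>
     (\<forall>u\<in>U. d u u = 0) \<and>
     (\<forall>u\<in>U. \<forall>v\<in>U. \<forall>w\<in>U. d u v \<le> d u w + d w v)"

definition dmin :: "('a \<Rightarrow> 'a \<Rightarrow> real) \<Rightarrow> 'a \<Rightarrow> 'a \<Rightarrow> real" where
  "dmin d u v = min (d u v) (d v u)"

definition dmax :: "('a \<Rightarrow> 'a \<Rightarrow> real) \<Rightarrow> 'a \<Rightarrow> 'a \<Rightarrow> real" where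
  "dmax d u v = max (d u v) (d v u)"

definition ammd_div :: "('a \<Rightarrow> 'a \<Rightarrow> real) \<Rightarrow> 'a set \<Rightarrow> real" where
  "ammd_div d S = Min {d u v | u v. u \<in> S \<and> v \<in> S \<and> u \<noteq> v}"

definition ammd_optimal :: "'a set \<Rightarrow> ('a \<Rightarrow> 'a \<Rightarrow> real) \<Rightarrow> nat \<Rightarrow> 'a set \<Rightarrow> bool" where
  "ammd_optimal U d k Opt \<longleftrightarrow> Opt \<subseteq> U \<and> card Opt = k \<and>
     (\<forall>S. S \<subseteq> U \<and> card S = k \<longrightarrow> ammd_div d S \<le> ammd_div d Opt)"

text \<open>A (complete) run of Cluster(U,d,R) with m iterations, centers c 0, ..., c (m-1)
  and sets A 0, ..., A (m-1) (0-indexed).\<close>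
definition cluster_run :: "'a set \<Rightarrow> ('a \<Rightarrow> 'a \<Rightarrow> real) \<Rightarrow> real \<Rightarrow> nat \<Rightarrow> (nat \<Rightarrow> 'a) \<Rightarrow> (nat \<Rightarrow> 'a set) \<Rightarrow> bool" where
  "cluster_run U d R m c A \<longleftrightarrow>
     (\<forall>t<m. c t \<in> U - (\<Union>s<t. A s) \<and>
            A t = {v \<in> U - (\<Union>s<t. A s). dmax d (c t) v < R}) \<and>
     (\<Union>t<m. A t) = U"

end

theory Submission
  imports Defs
begin

text \<open>Every point of a cluster A_t is at distance below R \<le> R' from its center c_t, in both
  directions. As R' is the least distance \<ge> R^*/3 between distinct points, every distance below R'
  is already below R^*/3. So two points of O in one cluster, or in two clusters with
  d(c_t, c_t') < R', would be joined by a path of at most three hops, each shorter than R^*/3,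
  contradicting div(O) = R^*.\<close>

definition min_dist_at_least :: "'a set \<Rightarrow> ('a \<Rightarrow> 'a \<Rightarrow> real) \<Rightarrow> real \<Rightarrow> real" where
  "min_dist_at_least U d \<theta> = Min {d u v | u v. u \<in> U \<and> v \<in> U \<and> u \<noteq> v \<and> d u v \<ge> \<theta>}"

lemma asym_pseudometric_triangle:
  assumes "asym_pseudometric U d" "x \<in> U" "a \<in> U" "y \<in> U"
  shows "d x y \<le> d x a + d a y"
  using assms unfolding asym_pseudometric_def by blast

lemma asym_pseudometric_triangle3:
  assumes "asym_pseudometric U d" "x \<in> U" "a \<in> U" "b \<in> U" "y \<in> U"
  shows "d x y \<le> d x a + d a b + d b y"
  using asym_pseudometric_triangle[OF assms(1,2,3,5)] asym_pseudometric_triangle[OF assms(1,3-5)]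
  by linarith

lemma finite_dist_image:
  assumes "finite U"
  shows "finite {d u v | u v. u \<in> U \<and> v \<in> U \<and> P u v}"
proof -
  have "{d u v | u v. u \<in> U \<and> v \<in> U \<and> P u v} \<subseteq> case_prod d ` (U \<times> U)" by auto
  then show ?thesis using assms by (meson finite_SigmaI finite_imageI finite_subset)
qed

lemma ammd_div_le:
  assumes "finite S" "u \<in> S" "v \<in> S" "u \<noteq> v"
  shows "ammd_div d S \<le> d u v"
  unfolding ammd_div_def using assms by (intro Min_le finite_dist_image) auto

lemma min_dist_at_least_le:
  assumes "finite U" "u \<in> U" "v \<in> U" "u \<noteq> v" "\<theta> \<le> d u v"
  shows "min_dist_at_least U d \<theta> \<le> d u v"
  unfolding min_dist_at_least_def using assms by (intro Min_le finite_dist_image) auto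

lemma min_dist_at_least_ge:
  assumes "finite U" "u \<in> U" "v \<in> U" "u \<noteq> v" "\<theta> \<le> d u v"
  shows "\<theta> \<le> min_dist_at_least U d \<theta>"
  unfolding min_dist_at_least_def using assms by (subst Min_ge_iff) (auto intro: finite_dist_image)

lemma less_min_dist_at_least_imp_less:
  assumes "asym_pseudometric U d" "0 < \<theta>" "u \<in> U" "v \<in> U"
    and "d u v < min_dist_at_least U d \<theta>"
  shows "d u v < \<theta>"
proof (cases "u = v")
  case True
  then show ?thesis using assms unfolding asym_pseudometric_def by simp
next
  case False
  have "finite U" using assms(1) unfolding asym_pseudometric_def by blast
  show ?thesis
  proof (rule ccontr)
    assume "\<not> d u v < \<theta>"
    then have "min_dist_at_least U d \<theta> \<le> d u v"
      using min_dist_at_least_le[OF \<open>finite U\<close> assms(3,4) False] by simp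
    with assms(5) show False by simp
  qed
qed

lemma cluster_run_member:
  assumes "cluster_run U d R m c A" "t < m" "v \<in> A t"
  shows "c t \<in> U" "v \<in> U" "d (c t) v < R" "d v (c t) < R"
proof -
  have "c t \<in> U - (\<Union>s<t. A s)" "A t = {v \<in> U - (\<Union>s<t. A s). dmax d (c t) v < R}"
    using assms(1,2) unfolding cluster_run_def by blast+
  then show "c t \<in> U" "v \<in> U" "d (c t) v < R" "d v (c t) < R"
    using assms(3) unfolding dmax_def by auto
qed

lemma cluster_run_disjoint:
  assumes "cluster_run U d R m c A" "t < m" "t' < m" "t \<noteq> t'"
  shows "A t \<inter> A t' = {}"
proof -
  have "A s \<inter> A s' = {}" if "s < s'" "s' < m" for s s'
    using assms(1) that unfolding cluster_run_def by blast
  then show ?thesis using assms(2-4) by (metis inf_commute linorder_neqE_nat)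
qed

lemma cluster_run_member_close:
  assumes "asym_pseudometric U d" "cluster_run U d R m c A" "0 < \<theta>"
    and "R \<le> min_dist_at_least U d \<theta>" "t < m" "v \<in> A t"
  shows "d (c t) v < \<theta>" "d v (c t) < \<theta>"
  using cluster_run_member[OF assms(2,5,6)] assms(4)
  by (auto intro!: less_min_dist_at_least_imp_less[OF assms(1,3)])

lemma cluster_run_card_inter_separated_le_1:
  assumes "asym_pseudometric U d" "cluster_run U d R m c A" "0 < \<theta>"
    and "R \<le> min_dist_at_least U d \<theta>" "t < m"
    and "finite S" "\<And>x y. x \<in> S \<Longrightarrow> y \<in> S \<Longrightarrow> x \<noteq> y \<Longrightarrow> 3 * \<theta> \<le> d x y"
  shows "card (A t \<inter> S) \<le> 1"
proof -
  have "x = y" if x: "x \<in> A t" "x \<in> S" and y: "y \<in> A t" "y \<in> S" for x y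
  proof (rule ccontr)
    assume "x \<noteq> y"
    have "d x y \<le> d x (c t) + d (c t) y"
      using cluster_run_member(1,2)[OF assms(2,5)] x y
      by (intro asym_pseudometric_triangle[OF assms(1)]) auto
    also have "\<dots> < 3 * \<theta>"
      using cluster_run_member_close(2)[OF assms(1-5) x(1)]
        cluster_run_member_close(1)[OF assms(1-5) y(1)] assms(3)
      by linarith
    finally show False using assms(7)[OF x(2) y(2) \<open>x \<noteq> y\<close>] by simp
  qed
  then show ?thesis using assms(6) by (auto simp add: card_le_Suc0_iff_eq)
qed

lemma cluster_run_centers_far:
  assumes "asym_pseudometric U d" "cluster_run U d R m c A" "0 < \<theta>"
    and "R \<le> min_dist_at_least U d \<theta>" "t < m" "t' < m" "t \<noteq> t'"
    and "\<And>x y. x \<in> S \<Longrightarrow> y \<in> S \<Longrightarrow> x \<noteq> y \<Longrightarrow> 3 * \<theta> \<le> d x y"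
    and "x \<in> A t \<inter> S" "y \<in> A t' \<inter> S"
  shows "min_dist_at_least U d \<theta> \<le> d (c t) (c t')"
proof (rule ccontr)
  assume "\<not> ?thesis"
  then have "d (c t) (c t') < \<theta>"
    using cluster_run_member(1)[OF assms(2)] assms(5,6,9,10)
    by (intro less_min_dist_at_least_imp_less[OF assms(1,3)]) auto
  have "x \<noteq> y" using cluster_run_disjoint[OF assms(2,5-7)] assms(9,10) by blast
  have "d x y \<le> d x (c t) + d (c t) (c t') + d (c t') y"
    using cluster_run_member(1,2)[OF assms(2)] assms(5,6,9,10)
    by (intro asym_pseudometric_triangle3[OF assms(1)]) auto
  also have "\<dots> < 3 * \<theta>"
    using cluster_run_member_close(2)[OF assms(1-5) assms(9)[THEN IntD1]]
      cluster_run_member_close(1)[OF assms(1-4,6) assms(10)[THEN IntD1]]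
      \<open>d (c t) (c t') < \<theta>\<close>
    by linarith
  finally show False using assms(8)[of x y] assms(9,10) \<open>x \<noteq> y\<close> by auto
qed

theorem proposition5p2:
  fixes U :: "'a set" and d :: "'a \<Rightarrow> 'a \<Rightarrow> real" and k :: nat and Opt :: "'a set"
    and Rstar R' R :: real and m :: nat and c :: "nat \<Rightarrow> 'a" and A :: "nat \<Rightarrow> 'a set"
  assumes "asym_pseudometric U d"
    and "k \<ge> 2"
    and "ammd_optimal U d k Opt"
    and "Rstar = ammd_div d Opt"
    and "Rstar > 0"
    and "R' = Min {d u v | u v. u \<in> U \<and> v \<in> U \<and> u \<noteq> v \<and> d u v \<ge> Rstar / 3}"
    and "0 < R" and "R \<le> R'"
    and "cluster_run U d R m c A"
  shows "(\<forall>t<m. card (A t \<inter> Opt) \<le> 1) \<and>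
         (\<forall>t<m. \<forall>t'<m. t \<noteq> t' \<and> card (A t \<inter> Opt) = 1 \<and> card (A t' \<inter> Opt) = 1 \<longrightarrow>
            dmin d (c t) (c t') \<ge> R' \<and> R' \<ge> Rstar / 3)"
proof -
  have "finite U" using assms(1) unfolding asym_pseudometric_def by blast
  moreover have "Opt \<subseteq> U" "card Opt = k" using assms(3) unfolding ammd_optimal_def by auto
  ultimately have "finite Opt" using finite_subset by blast
  have R': "R' = min_dist_at_least U d (Rstar / 3)"
    using assms(6) unfolding min_dist_at_least_def by simp
  have \<theta>: "0 < Rstar / 3" using assms(5) by simp
  have sep: "3 * (Rstar / 3) \<le> d x y" if "x \<in> Opt" "y \<in> Opt" "x \<noteq> y" for x y
    using ammd_div_le[OF \<open>finite Opt\<close> that] assms(4) by simp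
  note cluster = assms(1,9) \<theta> assms(8)[unfolded R']
  obtain x y where "x \<in> Opt" "y \<in> Opt" "x \<noteq> y"
    using \<open>card Opt = k\<close> assms(2) \<open>finite Opt\<close> card_le_Suc0_iff_eq[of Opt] by fastforce
  then have "Rstar / 3 \<le> R'"
    unfolding R' using sep \<open>Opt \<subseteq> U\<close> \<theta>
    by (intro min_dist_at_least_ge[OF \<open>finite U\<close>, of x y]) force+
  moreover have "R' \<le> d (c t) (c t')"
    if "t < m" "t' < m" "t \<noteq> t'" "card (A t \<inter> Opt) = 1" "card (A t' \<inter> Opt) = 1" for t t'
    using that cluster_run_centers_far[OF cluster that(1-3) sep] unfolding R'
    by (metis card_1_singletonE insertI1)
  ultimately show ?thesis
    using cluster_run_card_inter_separated_le_1[OF cluster _ \<open>finite Opt\<close> sep]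
    unfolding dmin_def by (metis min.boundedI)
qed

end
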